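(* Let $X$ be a rearrangement invariant space on $(0,\infty)$. If $L_\infty\hookrightarrow X$, then $X$ contains a lattice isometric copy of $\ell_\infty$.
   Context: A rearrangement invariant space on $(0,\infty)$ (Lebesgue measure) is a Banach space $X\subset L_0(0,\infty)$ such that $|f|\le|g|$ a.e., $g\in X$ imply $f\in X$, $\|f\|_X\le\|g\|_X$, containing an a.e. positive function, and such that equimeasurable functions have equal norms (if $f\in X$ and $g$ has the same distribution function, then $g\in X$ and $\|g\|_X=\|f\|_X$). $L_\infty\hookrightarrow X$ means $L_\infty(0,\infty)\subset X$ with continuous inclusion. A lattice isometric copy of $\ell_\infty$ is the image of a linear isometric embedding $T:\ell_\infty\to X$ that is a lattice homomorphism. *)

theory Defs
  imports "HOL-Analysis.Analysis"
begin

text \<open>Elements of L_0(0,\<infinity>) are represented by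
  Lebesgue-measurable functions real \<Rightarrow> real (values outside (0,\<infinity>) irrelevant);
  equality in L_0 is equality almost everywhere.\<close>

abbreviation Mpos :: "real measure" where
  "Mpos \<equiv> lebesgue_on {0<..}"

definition distr_fun :: "(real \<Rightarrow> real) \<Rightarrow> real \<Rightarrow> ennreal" where
  "distr_fun f s = emeasure Mpos {t \<in> space Mpos. \<bar>f t\<bar> > s}"

definition banach_function_space :: "(real \<Rightarrow> real) set \<Rightarrow> ((real \<Rightarrow> real) \<Rightarrow> real) \<Rightarrow> bool" where
  "banach_function_space X nX \<longleftrightarrow>
     X \<subseteq> borel_measurable Mpos \<and>
     (\<lambda>t. 0) \<in> X \<and>
     (\<forall>f\<in>X. \<forall>g\<in>X. (\<lambda>t. f t + g t) \<in> X) \<and>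
     (\<forall>f\<in>X. \<forall>c. (\<lambda>t. c * f t) \<in> X) \<and>
     (\<forall>f\<in>X. nX f \<ge> 0) \<and>
     (\<forall>f\<in>X. nX f = 0 \<longleftrightarrow> (AE t in Mpos. f t = 0)) \<and>
     (\<forall>f\<in>X. \<forall>g\<in>X. nX (\<lambda>t. f t + g t) \<le> nX f + nX g) \<and>
     (\<forall>f\<in>X. \<forall>c. nX (\<lambda>t. c * f t) = \<bar>c\<bar> * nX f) \<and>
     (\<forall>F. (\<forall>n. F n \<in> X) \<longrightarrow>
          (\<forall>e>0. \<exists>N. \<forall>m\<ge>N. \<forall>n\<ge>N. nX (\<lambda>t. F m t - F n t) < e) \<longrightarrow>
          (\<exists>f\<in>X. (\<lambda>n. nX (\<lambda>t. F n t - f t)) \<longlonglongrightarrow> 0))"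

definition ri_space :: "(real \<Rightarrow> real) set \<Rightarrow> ((real \<Rightarrow> real) \<Rightarrow> real) \<Rightarrow> bool" where
  "ri_space X nX \<longleftrightarrow>
     banach_function_space X nX \<and>
     (\<forall>f g. f \<in> borel_measurable Mpos \<longrightarrow> g \<in> X \<longrightarrow>
            (AE t in Mpos. \<bar>f t\<bar> \<le> \<bar>g t\<bar>) \<longrightarrow> f \<in> X \<and> nX f \<le> nX g) \<and>
     (\<exists>w\<in>X. AE t in Mpos. w t > 0) \<and>
     (\<forall>f g. f \<in> X \<longrightarrow> g \<in> borel_measurable Mpos \<longrightarrow>
            (\<forall>s. distr_fun g s = distr_fun f s) \<longrightarrow> g \<in> X \<and> nX g = nX f)"

text \<open>L_\<infinity>(0,\<infinity>) \<subseteq> X with continuous inclusion: \<open>\<parallel>f\<parallel>_X \<le> C \<parallel>f\<parallel>_\<infinity>\<close>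
  (stated with any a.e. bound B of |f|, equivalent to the essential supremum).\<close>
definition Linf_embeds :: "(real \<Rightarrow> real) set \<Rightarrow> ((real \<Rightarrow> real) \<Rightarrow> real) \<Rightarrow> bool" where
  "Linf_embeds X nX \<longleftrightarrow>
     (\<exists>C. \<forall>f B. f \<in> borel_measurable Mpos \<longrightarrow> (AE t in Mpos. \<bar>f t\<bar> \<le> B) \<longrightarrow>
            f \<in> X \<and> nX f \<le> C * B)"

definition lattice_isometric_copy_linf :: "(real \<Rightarrow> real) set \<Rightarrow> ((real \<Rightarrow> real) \<Rightarrow> real) \<Rightarrow> bool" where
  "lattice_isometric_copy_linf X nX \<longleftrightarrow>
     (\<exists>T :: (nat \<Rightarrow> real) \<Rightarrow> (real \<Rightarrow> real).
        (\<forall>x. bounded (range x) \<longrightarrow> T x \<in> X) \<and>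
        (\<forall>x y a b. bounded (range x) \<longrightarrow> bounded (range y) \<longrightarrow>
           (AE t in Mpos. T (\<lambda>n. a * x n + b * y n) t = a * T x t + b * T y t)) \<and>
        (\<forall>x y. bounded (range x) \<longrightarrow> bounded (range y) \<longrightarrow>
           (AE t in Mpos. T (\<lambda>n. max (x n) (y n)) t = max (T x t) (T y t))) \<and>
        (\<forall>x. bounded (range x) \<longrightarrow> nX (T x) = (SUP n. \<bar>x n\<bar>)))"

end

theory Submission
  imports Defs
begin

text \<open>Cut (0,\<infinity>) into the unit intervals (k, k+1) and distribute them, via the Cantor pairing
  k = \<langle>n, m\<rangle>, among countably many blocks A(n), each of infinite measure. The indicator of
  every block is equimeasurable with the constant 1, so it has the norm of 1, and
  x \<mapsto> (\<Sum>n. x(n) 1[A(n)]) / \<parallel>1\<parallel> is the required embedding: its norm is at most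
  sup |x(n)| because it is dominated by (sup |x(n)|) 1 / \<parallel>1\<parallel>, and at least each |x(n)|
  because it dominates x(n) 1[A(n)] / \<parallel>1\<parallel>. The embedding of L-infinity is only needed to
  know that 1 \<in> X.\<close>

definition block_index :: "real \<Rightarrow> nat" where
  "block_index t = fst (prod_decode (nat \<lfloor>t\<rfloor>))"

definition block :: "nat \<Rightarrow> real set" where
  "block n = {t \<in> space Mpos. block_index t = n}"

lemma measurable_block_index: "block_index \<in> lebesgue_on S \<rightarrow>\<^sub>M count_space UNIV"
proof -
  have "(floor :: real \<Rightarrow> int) \<in> lborel \<rightarrow>\<^sub>M count_space UNIV"
    by simp
  then have "(floor :: real \<Rightarrow> int) \<in> lebesgue \<rightarrow>\<^sub>M count_space UNIV"
    by (rule measurable_completion)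
  then have "(\<lambda>t::real. fst (prod_decode (nat \<lfloor>t\<rfloor>))) \<in> lebesgue \<rightarrow>\<^sub>M count_space UNIV"
    by (rule measurable_compose) simp
  then show ?thesis
    unfolding block_index_def by (rule measurable_restrict_space1)
qed

lemma borel_measurable_comp_block_index:
  "(\<lambda>t. h (block_index t) :: real) \<in> borel_measurable (lebesgue_on S)"
  using measurable_compose[OF measurable_block_index, of h borel] by simp

lemma sets_block: "block n \<in> sets Mpos"
proof -
  have "block n = block_index -` {n} \<inter> space Mpos"
    unfolding block_def by auto
  then show ?thesis
    using measurable_sets[OF measurable_block_index] by simp
qed

lemma emeasure_block: "emeasure Mpos (block n) = \<infinity>"
proof -
  define I where "I m = {real (prod_encode (n, m))<..<real (prod_encode (n, m)) + 1}" for m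
  have emeasure_I: "emeasure Mpos (I m) = 1" for m
    unfolding I_def by (subst emeasure_restrict_space) auto
  have sets_I: "range I \<subseteq> sets Mpos"
    unfolding I_def by (auto simp: sets_restrict_space_iff)
  have floor_I: "\<lfloor>t\<rfloor> = int (prod_encode (n, m))" if "t \<in> I m" for t m
    using that unfolding I_def by (intro floor_eq2) auto
  have I_subset_block: "I m \<subseteq> block n" for m
  proof
    fix t assume "t \<in> I m"
    with floor_I show "t \<in> block n"
      unfolding I_def block_def block_index_def by auto
  qed
  have "disjoint_family I"
    unfolding disjoint_family_on_def
  proof (intro ballI impI)
    fix i j :: nat assume "i \<noteq> j"
    then have "int (prod_encode (n, i)) \<noteq> int (prod_encode (n, j))"
      by (metis of_nat_eq_iff prod.inject prod_encode_eq)
    then show "I i \<inter> I j = {}"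
      by (metis disjoint_iff floor_I)
  qed
  have "\<infinity> = (\<Sum>m. emeasure Mpos (I m))"
    using summable_iff_suminf_neq_top[of "\<lambda>_. 1"] emeasure_I by (simp add: summable_const_iff)
  also have "\<dots> = emeasure Mpos (\<Union>m. I m)"
    using suminf_emeasure[OF sets_I \<open>disjoint_family I\<close>] .
  also have "\<dots> \<le> emeasure Mpos (block n)"
    using I_subset_block by (intro emeasure_mono[OF _ sets_block]) blast
  finally show ?thesis by (simp add: top_unique)
qed

lemma emeasure_space_Mpos: "emeasure Mpos (space Mpos) = \<infinity>"
  using emeasure_space[of Mpos "block 0"] emeasure_block by (simp add: top_unique)

lemma distr_fun_indicator_infinite:
  assumes "A \<in> sets Mpos" and "emeasure Mpos A = \<infinity>"
  shows "distr_fun (indicator A) s = distr_fun (\<lambda>_. 1) s"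
proof -
  have "A \<subseteq> space Mpos"
    using assms(1) by (rule sets.sets_into_space)
  then have "{t \<in> space Mpos. s < \<bar>indicator A t :: real\<bar>} =
             (if s < 0 then space Mpos else if s < 1 then A else {})"
    by (auto simp: indicator_def)
  moreover have "{t \<in> space Mpos. s < \<bar>1 :: real\<bar>} = (if s < 1 then space Mpos else {})"
    by auto
  ultimately show ?thesis
    unfolding distr_fun_def using assms(2) emeasure_space_Mpos by simp
qed

lemma banach_function_space_scale:
  assumes "banach_function_space X nX" and "f \<in> X"
  shows "(\<lambda>t. c * f t) \<in> X \<and> nX (\<lambda>t. c * f t) = \<bar>c\<bar> * nX f"
  using assms unfolding banach_function_space_def by blast

lemma ri_space_dominated:
  assumes "ri_space X nX" and "f \<in> borel_measurable Mpos" and "g \<in> X"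
    and "\<And>t. \<bar>f t\<bar> \<le> \<bar>g t\<bar>"
  shows "f \<in> X \<and> nX f \<le> nX g"
proof -
  have "AE t in Mpos. \<bar>f t\<bar> \<le> \<bar>g t\<bar>"
    using assms(4) by simp
  with assms(1-3) show ?thesis
    unfolding ri_space_def by blast
qed

lemma banach_function_space_norm_const_pos:
  assumes "banach_function_space X nX" and "(\<lambda>_. 1) \<in> X"
  shows "nX (\<lambda>_. 1) > 0"
proof -
  have "nX (\<lambda>_. 1) \<noteq> 0"
  proof
    assume "nX (\<lambda>_. 1) = 0"
    then have "AE t in Mpos. False"
      using assms unfolding banach_function_space_def by auto
    then have "ae_filter Mpos = bot"
      by (simp add: trivial_limit_def)
    then show False
      using emeasure_space_Mpos by (simp add: ae_filter_eq_bot_iff)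
  qed
  moreover have "nX (\<lambda>_. 1) \<ge> 0"
    using assms unfolding banach_function_space_def by blast
  ultimately show ?thesis by simp
qed

lemma ri_space_norm_indicator_infinite:
  assumes "ri_space X nX" and "(\<lambda>_. 1) \<in> X"
    and "A \<in> sets Mpos" and "emeasure Mpos A = \<infinity>"
  shows "indicator A \<in> X \<and> nX (indicator A) = nX (\<lambda>_. 1)"
proof -
  have "indicator A \<in> borel_measurable Mpos"
    using assms(3) by (rule borel_measurable_indicator)
  then show ?thesis
    using assms(1,2) distr_fun_indicator_infinite[OF assms(3,4)]
    unfolding ri_space_def by blast
qed

lemma ri_space_norm_comp_block_index:
  assumes "ri_space X nX" and "(\<lambda>_. 1) \<in> X" and "bounded (range x)"
  shows "(\<lambda>t. x (block_index t)) \<in> X \<and>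
    nX (\<lambda>t. x (block_index t)) = (SUP n. \<bar>x n\<bar>) * nX (\<lambda>_. 1)"
    (is "?f \<in> X \<and> nX ?f = ?S * ?one")
proof -
  have X: "banach_function_space X nX"
    using assms(1) unfolding ri_space_def by blast
  have "bdd_above (range (\<lambda>n. \<bar>x n\<bar>))"
    using assms(3) unfolding bounded_real by (auto intro: bdd_aboveI)
  then have x_le_S: "\<bar>x n\<bar> \<le> ?S" for n
    by (rule cSUP_upper[rotated]) simp
  then have "?S \<ge> 0"
    by (meson abs_ge_zero order_trans)
  have f_meas: "?f \<in> borel_measurable Mpos"
    by (rule borel_measurable_comp_block_index)
  have f_le_S: "\<bar>?f t\<bar> \<le> \<bar>?S * 1\<bar>" for t
    using x_le_S \<open>?S \<ge> 0\<close> by simp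
  have const_S: "(\<lambda>t. ?S * 1) \<in> X" "nX (\<lambda>t. ?S * 1) = ?S * ?one"
    using banach_function_space_scale[OF X assms(2), of ?S] \<open>?S \<ge> 0\<close> by auto
  with ri_space_dominated[OF assms(1) f_meas const_S(1) f_le_S]
  have f_in_X: "?f \<in> X" and upper: "nX ?f \<le> ?S * ?one"
    by auto
  have "\<bar>x n\<bar> * ?one \<le> nX ?f" for n
  proof -
    have "(\<lambda>t. x n * indicator (block n) t) \<in> borel_measurable Mpos"
      using sets_block by measurable
    moreover have "\<bar>x n * indicator (block n) t\<bar> \<le> \<bar>?f t\<bar>" for t
      by (simp add: indicator_def block_def)
    ultimately have "nX (\<lambda>t. x n * indicator (block n) t) \<le> nX ?f"
      using ri_space_dominated[OF assms(1) _ f_in_X] by blast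
    then show ?thesis
      using banach_function_space_scale[OF X, of "indicator (block n)" "x n"]
        ri_space_norm_indicator_infinite[OF assms(1,2) sets_block emeasure_block] by simp
  qed
  moreover have "?one > 0"
    using banach_function_space_norm_const_pos[OF X assms(2)] .
  ultimately have "?S \<le> nX ?f / ?one"
    by (intro cSUP_least) (auto simp: pos_le_divide_eq)
  with \<open>?one > 0\<close> f_in_X upper show ?thesis
    by (simp add: pos_le_divide_eq)
qed

lemma ri_space_lattice_isometric_copy_linf:
  assumes "ri_space X nX" and "(\<lambda>_. 1) \<in> X"
  shows "lattice_isometric_copy_linf X nX"
proof -
  have X: "banach_function_space X nX"
    using assms(1) unfolding ri_space_def by blast
  define c where "c = 1 / nX (\<lambda>_. 1)"
  have "c > 0" and c_norm: "c * nX (\<lambda>_. 1) = 1"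
    using banach_function_space_norm_const_pos[OF X assms(2)] unfolding c_def by auto
  define T where "T x = (\<lambda>t. c * x (block_index t))" for x :: "nat \<Rightarrow> real"
  have "T x \<in> X \<and> nX (T x) = (SUP n. \<bar>x n\<bar>)" if "bounded (range x)" for x
    using ri_space_norm_comp_block_index[OF assms that] \<open>c > 0\<close> c_norm
      banach_function_space_scale[OF X, of "\<lambda>t. x (block_index t)" c]
    unfolding T_def by (simp add: mult.left_commute)
  moreover have "T (\<lambda>n. a * x n + b * y n) t = a * T x t + b * T y t" for x y a b t
    unfolding T_def by (simp add: algebra_simps)
  moreover have "T (\<lambda>n. max (x n) (y n)) t = max (T x t) (T y t)" for x y t
    unfolding T_def using \<open>c > 0\<close> by (simp add: max_mult_distrib_left)
  ultimately show ?thesis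
    unfolding lattice_isometric_copy_linf_def by (intro exI[of _ T]) auto
qed

theorem lemma3p10:
  fixes X :: "(real \<Rightarrow> real) set" and nX :: "(real \<Rightarrow> real) \<Rightarrow> real"
  assumes "ri_space X nX"
    and "Linf_embeds X nX"
  shows "lattice_isometric_copy_linf X nX"
proof -
  obtain C where "\<forall>f B. f \<in> borel_measurable Mpos \<longrightarrow> (AE t in Mpos. \<bar>f t\<bar> \<le> B) \<longrightarrow>
      f \<in> X \<and> nX f \<le> C * B"
    using assms(2) unfolding Linf_embeds_def by blast
  then have "(\<lambda>_. 1) \<in> X"
    by (metis (mono_tags) abs_one borel_measurable_const order_refl AE_I2)
  with assms(1) show ?thesis
    by (rule ri_space_lattice_isometric_copy_linf)
qed

end
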